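(* Fix $T>1$ and constants $A,B>0$. Let $\mathbb{P}_0$ be the law of the set of event times in $[0,T]$ of an inhomogeneous Poisson point process with rate function $\Lambda_0(t)=B$, and let $\mathbb{P}_1$ be the corresponding law for the rate function \[ \Lambda_1(t)=B+Ae^{-(t-1)}\mathbf 1(t\ge 1). \] If $A/\sqrt{B}\to 0$, then no estimator can correctly detect a jump at $t=1$ with probability greater than $1/2+o(1)$; that is, for every test $\psi$ (a measurable function of the observed event times with values in $\{0,1\}$, where $\psi=1$ declares a jump at $t=1$), one has $\tfrac12\big(\mathbb{P}_0(\psi=0)+\mathbb{P}_1(\psi=1)\big)\le \tfrac12+o(1)$.
   Context: An inhomogeneous Poisson point process with (deterministic) rate function $\Lambda\ge 0$ is a point process on $[0,\infty)$ whose number of points in disjoint intervals are independent and whose number of points in an interval $I$ is Poisson with mean $\int_I\Lambda(s)\,ds$. The asymptotics $o(1)$ are as the parameters vary with $A/\sqrt B\to 0$. *)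

theory Defs
  imports "HOL-Probability.Probability"
begin

definition rate1 :: "real \<Rightarrow> real \<Rightarrow> real \<Rightarrow> real" where
  "rate1 A B t = B + (if t \<ge> 1 then A * exp (- (t - 1)) else 0)"

definition ppp_mean :: "real \<Rightarrow> (real \<Rightarrow> real) \<Rightarrow> real" where
  "ppp_mean T \<Lambda> = (\<integral>t\<in>{0..T}. \<Lambda> t \<partial>lborel)"

(* Sample space: (number of points N, i.i.d. sequence of locations) *)
definition obs_space :: "(nat \<times> (nat \<Rightarrow> real)) measure" where
  "obs_space = count_space UNIV \<Otimes>\<^sub>M (\<Pi>\<^sub>M i\<in>UNIV. borel)"

(* Standard construction of the inhomogeneous Poisson point process on [0,T]:
   N ~ Poisson(int_0^T Lambda), and independently i.i.d. locations with density
   Lambda / int_0^T Lambda on [0,T]; the process is {X_i : i < N}. *)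
definition ppp_sample :: "real \<Rightarrow> (real \<Rightarrow> real) \<Rightarrow> (nat \<times> (nat \<Rightarrow> real)) measure" where
  "ppp_sample T \<Lambda> =
     measure_pmf (poisson_pmf (ppp_mean T \<Lambda>)) \<Otimes>\<^sub>M
     (\<Pi>\<^sub>M i\<in>UNIV. density lborel (\<lambda>t. ennreal (indicator {0..T} t * \<Lambda> t / ppp_mean T \<Lambda>)))"

definition event_times :: "nat \<times> (nat \<Rightarrow> real) \<Rightarrow> real set" where
  "event_times \<omega> = (snd \<omega>) ` {..<fst \<omega>}"

definition ppp_prob :: "real \<Rightarrow> (real \<Rightarrow> real) \<Rightarrow> (real set \<Rightarrow> bool) \<Rightarrow> real" where
  "ppp_prob T \<Lambda> P =
     measure (ppp_sample T \<Lambda>) {\<omega> \<in> space (ppp_sample T \<Lambda>). P (event_times \<omega>)}"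

end

theory Submission
  imports Defs
begin

(*
  Given the number of points, a Poisson process on [0,T] is an i.i.d. sample from its normalised
  rate, so on the slice with n points the law P1 has density (p1(n)/p0(n)) prod_{i<n} r(x_i)
  with respect to P0, where p0, p1 are the Poisson weights of the total masses m0, m1 and
  r = (m0 Lambda1)/(m1 Lambda0). By the Poisson generating function the second moment of this
  likelihood ratio L under P0 is exp chi, where chi = int_0^T (Lambda1 - Lambda0)^2 / Lambda0.
  The pointwise inequality L <= 1 + eta + (L - 1)^2/(4 eta) then gives
  P1(E) <= (1 + eta) P0(E) + (exp chi - 1)/(4 eta) for every event E. For the rates of the
  theorem chi <= T A^2/B, which tends to 0.
*)

lemma PiM_density_eq_density_prod:
  fixes M :: "'a measure" and r :: "'a \<Rightarrow> ennreal"
  assumes "finite I" and "prob_space M" and "prob_space (density M r)"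
    and [measurable]: "r \<in> borel_measurable M"
  shows "PiM I (\<lambda>_. density M r) = density (PiM I (\<lambda>_. M)) (\<lambda>x. \<Prod>i\<in>I. r (x i))"
proof -
  interpret P: product_prob_space "\<lambda>_. density M r" I
    using assms(3) by (intro product_prob_spaceI) auto
  interpret Q: product_prob_space "\<lambda>_. M" I
    using assms(2) by (intro product_prob_spaceI) auto
  show ?thesis
  proof (rule P.PiM_eqI[symmetric])
    show "sets (density (PiM I (\<lambda>_. M)) (\<lambda>x. \<Prod>i\<in>I. r (x i))) = sets (PiM I (\<lambda>_. density M r))"
      by (auto intro!: sets_PiM_cong)
  next
    fix A assume "\<And>i. i \<in> I \<Longrightarrow> A i \<in> sets (density M r)"
    then have A[measurable]: "\<And>i. i \<in> I \<Longrightarrow> A i \<in> sets M" by auto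
    have "emeasure (density (PiM I (\<lambda>_. M)) (\<lambda>x. \<Prod>i\<in>I. r (x i))) (PiE I A)
       = (\<integral>\<^sup>+ x. (\<Prod>i\<in>I. r (x i)) * indicator (PiE I A) x \<partial>PiM I (\<lambda>_. M))"
      using A by (subst emeasure_density) (auto intro!: sets_PiM_I_finite \<open>finite I\<close>)
    also have "\<dots> = (\<integral>\<^sup>+ x. (\<Prod>i\<in>I. r (x i) * indicator (A i) (x i)) \<partial>PiM I (\<lambda>_. M))"
      by (intro nn_integral_cong)
         (auto simp: prod.distrib indicator_def PiE_def Pi_def space_PiM prod_zero_iff \<open>finite I\<close>)
    also have "\<dots> = (\<Prod>i\<in>I. \<integral>\<^sup>+ y. r y * indicator (A i) y \<partial>M)"
      using A by (subst Q.product_nn_integral_prod) (auto simp: \<open>finite I\<close>)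
    also have "\<dots> = (\<Prod>i\<in>I. emeasure (density M r) (A i))"
      using A by (intro prod.cong) (auto simp: emeasure_density)
    finally show "emeasure (density (PiM I (\<lambda>_. M)) (\<lambda>x. \<Prod>i\<in>I. r (x i))) (PiE I A)
        = (\<Prod>i\<in>I. emeasure (density M r) (A i))" .
  qed fact
qed

lemma le_one_plus_square_div:
  fixes x \<eta> :: real
  assumes "0 < \<eta>"
  shows "x \<le> 1 + \<eta> + (x - 1)\<^sup>2 / (4 * \<eta>)"
proof -
  have "0 \<le> (x - 1 - 2 * \<eta>)\<^sup>2" by simp
  then have "4 * \<eta> * x \<le> 4 * \<eta> * (1 + \<eta>) + (x - 1)\<^sup>2"
    by (simp add: power2_eq_square algebra_simps)
  with assms show ?thesis by (simp add: field_simps)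
qed

lemma (in prob_space) integral_indicator_le_second_moment:
  fixes g :: "'a \<Rightarrow> real"
  assumes g: "integrable M g" and g2: "integrable M (\<lambda>x. (g x)\<^sup>2)"
    and E: "E \<in> events" and \<eta>: "0 < \<eta>"
  shows "(\<integral>x. g x * indicator E x \<partial>M) \<le> (1 + \<eta>) * prob E + (\<integral>x. (g x - 1)\<^sup>2 \<partial>M) / (4 * \<eta>)"
proof -
  have sq: "(g x - 1)\<^sup>2 = (g x)\<^sup>2 - 2 * g x + 1" for x
    by (simp add: power2_eq_square algebra_simps)
  have sq_int: "integrable M (\<lambda>x. (g x - 1)\<^sup>2)"
    unfolding sq using g g2 by auto
  have ind_int: "integrable M (\<lambda>x. indicator E x :: real)"
    using E by (intro integrable_real_indicator) (auto simp: less_top[symmetric])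
  have "(\<integral>x. g x * indicator E x \<partial>M)
      \<le> (\<integral>x. (1 + \<eta>) * indicator E x + (g x - 1)\<^sup>2 / (4 * \<eta>) \<partial>M)"
    using integrable_real_mult_indicator[OF E g] ind_int sq_int le_one_plus_square_div[OF \<eta>] \<eta>
    by (intro integral_mono) (auto simp: indicator_def)
  also have "\<dots> = (1 + \<eta>) * prob E + (\<integral>x. (g x - 1)\<^sup>2 \<partial>M) / (4 * \<eta>)"
    using E ind_int sq_int by (simp add: integral_add Int_absorb2)
  finally show ?thesis .
qed

lemma (in prob_space) prob_space_density_real:
  fixes r :: "'a \<Rightarrow> real"
  assumes "integrable M r" and "\<And>x. x \<in> space M \<Longrightarrow> 0 \<le> r x" and "(\<integral>x. r x \<partial>M) = 1"
  shows "prob_space (density M r)"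
proof (rule prob_spaceI)
  have "(\<integral>\<^sup>+ x. ennreal (r x) \<partial>M) = ennreal (\<integral>x. r x \<partial>M)"
    using assms by (intro nn_integral_eq_integral) (auto intro!: AE_I2)
  then show "emeasure (density M r) (space (density M r)) = 1"
    using assms(1,3) by (simp add: emeasure_density)
qed

lemma PiM_density_real_eq_density_prod:
  fixes r :: "'a \<Rightarrow> real"
  assumes "finite I" and "prob_space M"
    and [measurable]: "r \<in> borel_measurable M" and r_nonneg: "\<And>x. x \<in> space M \<Longrightarrow> 0 \<le> r x"
    and "integrable M r" and "(\<integral>x. r x \<partial>M) = 1"
  shows "PiM I (\<lambda>_. density M r) = density (PiM I (\<lambda>_. M)) (\<lambda>x. \<Prod>i\<in>I. r (x i))"
proof -
  have "PiM I (\<lambda>_. density M r) = density (PiM I (\<lambda>_. M)) (\<lambda>x. \<Prod>i\<in>I. ennreal (r (x i)))"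
    using prob_space.prob_space_density_real[OF \<open>prob_space M\<close> assms(5) r_nonneg assms(6)]
    by (intro PiM_density_eq_density_prod \<open>finite I\<close> \<open>prob_space M\<close>) auto
  also have "\<dots> = density (PiM I (\<lambda>_. M)) (\<lambda>x. \<Prod>i\<in>I. r (x i))"
    using r_nonneg by (intro density_cong AE_I2 prod_ennreal) (auto simp: space_PiM)
  finally show ?thesis .
qed

lemma measure_density_eq_integral:
  fixes g :: "'a \<Rightarrow> real"
  assumes [measurable]: "g \<in> borel_measurable M" and "\<And>x. x \<in> space M \<Longrightarrow> 0 \<le> g x"
    and E: "E \<in> sets M"
  shows "measure (density M g) E = (\<integral>x. g x * indicator E x \<partial>M)"
proof -
  have "measure (density M g) E = (\<integral>x. indicator E x \<partial>density M g)"
    using sets.sets_into_space[OF E] by (simp add: Int_absorb2)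
  also have "\<dots> = (\<integral>x. g x * indicator E x \<partial>M)"
    using assms by (subst integral_density) (auto intro!: AE_I2)
  finally show ?thesis .
qed

lemma measure_PiM_density_le_second_moment:
  fixes r :: "'a \<Rightarrow> real"
  assumes "finite I" and "prob_space M"
    and [measurable]: "r \<in> borel_measurable M" and r_nonneg: "\<And>x. x \<in> space M \<Longrightarrow> 0 \<le> r x"
    and r_int: "integrable M r" and r2_int: "integrable M (\<lambda>x. (r x)\<^sup>2)"
    and r_total: "(\<integral>x. r x \<partial>M) = 1"
    and E: "E \<in> sets (PiM I (\<lambda>_. M))" and "0 \<le> l" and "0 < \<eta>"
  shows "l * measure (PiM I (\<lambda>_. density M r)) E
    \<le> (1 + \<eta>) * measure (PiM I (\<lambda>_. M)) E
      + (l\<^sup>2 * (\<integral>x. (r x)\<^sup>2 \<partial>M) ^ card I - 2 * l + 1) / (4 * \<eta>)"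
proof -
  interpret Q: product_prob_space "\<lambda>_. M" I
    using \<open>prob_space M\<close> by (intro product_prob_spaceI) auto
  define g where "g x = (\<Prod>i\<in>I. r (x i))" for x
  have [measurable]: "g \<in> borel_measurable (PiM I (\<lambda>_. M))"
    unfolding g_def by measurable
  have g_nonneg: "0 \<le> g x" if "x \<in> space (PiM I (\<lambda>_. M))" for x
    using that r_nonneg unfolding g_def by (auto simp: space_PiM intro!: prod_nonneg)
  have g_int: "integrable (PiM I (\<lambda>_. M)) g" and g_total: "(\<integral>x. g x \<partial>PiM I (\<lambda>_. M)) = 1"
    unfolding g_def using r_int r_total \<open>finite I\<close>
    by (auto intro!: Q.product_integrable_prod simp: Q.product_integral_prod[of I "\<lambda>_. r"])
  have g2_int: "integrable (PiM I (\<lambda>_. M)) (\<lambda>x. (g x)\<^sup>2)"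
    and g2_total: "(\<integral>x. (g x)\<^sup>2 \<partial>PiM I (\<lambda>_. M)) = (\<integral>x. (r x)\<^sup>2 \<partial>M) ^ card I"
    unfolding g_def prod_power_distrib using r2_int \<open>finite I\<close>
    by (auto intro!: Q.product_integrable_prod simp: Q.product_integral_prod[of I "\<lambda>_ x. (r x)\<^sup>2"])
  have "l * measure (PiM I (\<lambda>_. density M r)) E = (\<integral>x. l * g x * indicator E x \<partial>PiM I (\<lambda>_. M))"
    using E g_nonneg
    by (simp add: PiM_density_real_eq_density_prod[OF assms(1-5) r_total, folded g_def]
        measure_density_eq_integral mult.assoc)
  also have "\<dots> \<le> (1 + \<eta>) * measure (PiM I (\<lambda>_. M)) E
      + (\<integral>x. (l * g x - 1)\<^sup>2 \<partial>PiM I (\<lambda>_. M)) / (4 * \<eta>)"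
    using g_int g2_int E \<open>0 < \<eta>\<close>
    by (intro Q.P.integral_indicator_le_second_moment) (auto simp: power_mult_distrib)
  also have "(\<integral>x. (l * g x - 1)\<^sup>2 \<partial>PiM I (\<lambda>_. M)) = l\<^sup>2 * (\<integral>x. (r x)\<^sup>2 \<partial>M) ^ card I - 2 * l + 1"
    using g_int g2_int g_total g2_total Q.P.prob_space
    by (simp add: power2_diff power_mult_distrib algebra_simps)
  finally show ?thesis .
qed

lemma pair_measure_pmf_sums:
  fixes p :: "nat pmf"
  assumes "prob_space M" and S: "S \<in> sets (measure_pmf p \<Otimes>\<^sub>M M)"
  shows "(\<lambda>n. pmf p n * measure M (Pair n -` S)) sums measure (measure_pmf p \<Otimes>\<^sub>M M) S"
proof -
  interpret M: prob_space M by fact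
  interpret PM: prob_space "measure_pmf p \<Otimes>\<^sub>M M"
    by (intro prob_space_pair M.prob_space_axioms measure_pmf.prob_space_axioms)
  have "(\<Sum>n. ennreal (pmf p n * measure M (Pair n -` S))) = (\<integral>\<^sup>+ n. emeasure M (Pair n -` S) \<partial>measure_pmf p)"
    by (simp add: nn_integral_measure_pmf nn_integral_count_space_nat M.emeasure_eq_measure ennreal_mult)
  also have "\<dots> = ennreal (measure (measure_pmf p \<Otimes>\<^sub>M M) S)"
    using M.emeasure_pair_measure_alt[OF S] by (simp add: PM.emeasure_eq_measure)
  finally have "(\<lambda>n. ennreal (pmf p n * measure M (Pair n -` S)))
      sums ennreal (measure (measure_pmf p \<Otimes>\<^sub>M M) S)"
    by (metis summable_sums summableI)
  then show ?thesis
    by (simp add: sums_ennreal)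
qed

lemma poisson_pmf_sums:
  assumes "0 < m"
  shows "pmf (poisson_pmf m) sums 1"
proof -
  have "(\<lambda>n. m ^ n /\<^sub>R fact n * exp (- m)) sums (exp m * exp (- m))"
    by (intro sums_mult2 exp_converges)
  moreover have "pmf (poisson_pmf m) = (\<lambda>n. m ^ n /\<^sub>R fact n * exp (- m))"
    using assms by (simp add: fun_eq_iff divide_inverse)
  ultimately show ?thesis
    by (simp add: mult_exp_exp)
qed

lemma poisson_pmf_chi_square_sums:
  assumes "0 < m0" and "0 < m1"
  shows "(\<lambda>n. (pmf (poisson_pmf m1) n)\<^sup>2 * c ^ n / pmf (poisson_pmf m0) n)
    sums exp (m0 - 2 * m1 + m1\<^sup>2 * c / m0)"
proof -
  have "(\<lambda>n. exp (m0 - 2 * m1) * ((m1\<^sup>2 * c / m0) ^ n /\<^sub>R fact n))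
      sums (exp (m0 - 2 * m1) * exp (m1\<^sup>2 * c / m0))"
    by (intro sums_mult exp_converges)
  moreover have "exp (m0 - 2 * m1) * ((m1\<^sup>2 * c / m0) ^ n /\<^sub>R fact n)
      = (pmf (poisson_pmf m1) n)\<^sup>2 * c ^ n / pmf (poisson_pmf m0) n" for n
    using assms
    by (simp add: power_mult_distrib power_divide power2_eq_square exp_diff exp_minus
        mult_exp_exp field_simps flip: power_mult)
  ultimately show ?thesis
    by (simp add: mult_exp_exp)
qed

definition ppp_location :: "real \<Rightarrow> (real \<Rightarrow> real) \<Rightarrow> real measure" where
  "ppp_location T \<Lambda> = density lborel (\<lambda>t. ennreal (indicator {0..T} t * \<Lambda> t / ppp_mean T \<Lambda>))"

lemma sets_ppp_location [measurable_cong, simp]: "sets (ppp_location T \<Lambda>) = sets borel"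
  by (simp add: ppp_location_def)

lemma space_ppp_location [simp]: "space (ppp_location T \<Lambda>) = UNIV"
  by (simp add: ppp_location_def)

lemma ppp_sample_eq_pair_measure:
  "ppp_sample T \<Lambda>
    = measure_pmf (poisson_pmf (ppp_mean T \<Lambda>)) \<Otimes>\<^sub>M (\<Pi>\<^sub>M i\<in>UNIV. ppp_location T \<Lambda>)"
  by (simp add: ppp_sample_def ppp_location_def)

lemma sets_ppp_sample: "sets (ppp_sample T \<Lambda>) = sets obs_space"
  unfolding ppp_sample_eq_pair_measure obs_space_def
  by (intro sets_pair_measure_cong sets_PiM_cong) auto

lemma prob_space_ppp_location:
  assumes [measurable]: "\<Lambda> \<in> borel_measurable borel"
    and "set_integrable lborel {0..T} \<Lambda>" and "\<And>t. t \<in> {0..T} \<Longrightarrow> 0 \<le> \<Lambda> t"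
    and "0 < ppp_mean T \<Lambda>"
  shows "prob_space (ppp_location T \<Lambda>)"
proof (rule prob_spaceI)
  have "(\<integral>\<^sup>+ t. ennreal (indicator {0..T} t * \<Lambda> t / ppp_mean T \<Lambda>) \<partial>lborel)
      = ennreal (\<integral>t. indicator {0..T} t * \<Lambda> t / ppp_mean T \<Lambda> \<partial>lborel)"
    using assms by (intro nn_integral_eq_integral AE_I2)
      (auto simp: set_integrable_def indicator_def)
  also have "(\<integral>t. indicator {0..T} t * \<Lambda> t / ppp_mean T \<Lambda> \<partial>lborel) = 1"
    using assms(4) by (simp add: ppp_mean_def set_lebesgue_integral_def)
  finally show "emeasure (ppp_location T \<Lambda>) (space (ppp_location T \<Lambda>)) = 1"
    by (simp add: ppp_location_def emeasure_density)
qed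

lemma prob_space_ppp_sample:
  assumes "prob_space (ppp_location T \<Lambda>)"
  shows "prob_space (ppp_sample T \<Lambda>)"
proof -
  interpret product_prob_space "\<lambda>_. ppp_location T \<Lambda>" UNIV
    using assms by (intro product_prob_spaceI) auto
  show ?thesis
    unfolding ppp_sample_eq_pair_measure
    by (intro prob_space_pair P.prob_space_axioms measure_pmf.prob_space_axioms)
qed

lemma sets_ppp_event:
  assumes "(\<lambda>\<omega>. \<psi> (event_times \<omega>)) \<in> measurable obs_space (count_space UNIV)"
  shows "{\<omega> \<in> space (ppp_sample T \<Lambda>). \<psi> (event_times \<omega>)} \<in> sets (ppp_sample T \<Lambda>)"
proof -
  have "(\<lambda>\<omega>. \<psi> (event_times \<omega>)) \<in> measurable (ppp_sample T \<Lambda>) (count_space UNIV)"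
    using assms by (simp add: measurable_cong_sets[OF sets_ppp_sample refl])
  from measurable_sets[OF this, of "{True}"] show ?thesis
    by (simp add: vimage_def Int_def conj_commute)
qed

lemma ppp_prob_not:
  assumes "prob_space (ppp_location T \<Lambda>)"
    and "(\<lambda>\<omega>. \<psi> (event_times \<omega>)) \<in> measurable obs_space (count_space UNIV)"
  shows "ppp_prob T \<Lambda> (\<lambda>S. \<not> \<psi> S) = 1 - ppp_prob T \<Lambda> \<psi>"
proof -
  interpret prob_space "ppp_sample T \<Lambda>"
    using assms(1) by (rule prob_space_ppp_sample)
  have "{\<omega> \<in> space (ppp_sample T \<Lambda>). \<not> \<psi> (event_times \<omega>)}
      = space (ppp_sample T \<Lambda>) - {\<omega> \<in> space (ppp_sample T \<Lambda>). \<psi> (event_times \<omega>)}"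
    by auto
  then show ?thesis
    unfolding ppp_prob_def using prob_compl[OF sets_ppp_event[OF assms(2)]] by simp
qed

definition sample_event :: "nat \<Rightarrow> (real set \<Rightarrow> bool) \<Rightarrow> (nat \<Rightarrow> real) set" where
  "sample_event n \<psi> = {x \<in> {..<n} \<rightarrow>\<^sub>E UNIV. \<psi> (x ` {..<n})}"

lemma sets_sample_event:
  assumes "(\<lambda>\<omega>. \<psi> (event_times \<omega>)) \<in> measurable obs_space (count_space UNIV)"
  shows "sample_event n \<psi> \<in> sets (\<Pi>\<^sub>M i\<in>{..<n}. borel)"
proof -
  define pad where "pad x = (n, \<lambda>i. if i < n then x i else 0)" for x :: "nat \<Rightarrow> real"
  have "(\<lambda>x i. if i < n then x i else 0 :: real) \<in> measurable (\<Pi>\<^sub>M i\<in>{..<n}. borel) (\<Pi>\<^sub>M i\<in>UNIV. borel)"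
  proof (rule measurable_PiM_single')
    show "(\<lambda>x. if i < n then x i else 0 :: real) \<in> borel_measurable (\<Pi>\<^sub>M i\<in>{..<n}. borel)" for i
      by (cases "i < n") auto
  qed auto
  then have "pad \<in> measurable (\<Pi>\<^sub>M i\<in>{..<n}. borel) obs_space"
    unfolding pad_def obs_space_def by measurable
  moreover have "sample_event n \<psi>
      = (\<lambda>x. \<psi> (event_times (pad x))) -` {True} \<inter> space (\<Pi>\<^sub>M i\<in>{..<n}. borel)"
  proof -
    have "event_times (pad x) = x ` {..<n}" for x
      by (auto simp: pad_def event_times_def)
    then show ?thesis
      by (auto simp: sample_event_def space_PiM)
  qed
  ultimately show ?thesis
    using measurable_sets[OF measurable_compose[OF _ assms], of pad _ "{True}"] by simp
qed

lemma ppp_prob_sums: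
  assumes "prob_space (ppp_location T \<Lambda>)"
    and \<psi>: "(\<lambda>\<omega>. \<psi> (event_times \<omega>)) \<in> measurable obs_space (count_space UNIV)"
  shows "(\<lambda>n. pmf (poisson_pmf (ppp_mean T \<Lambda>)) n
      * measure (\<Pi>\<^sub>M i\<in>{..<n}. ppp_location T \<Lambda>) (sample_event n \<psi>)) sums ppp_prob T \<Lambda> \<psi>"
proof -
  interpret Q: product_prob_space "\<lambda>_. ppp_location T \<Lambda>" UNIV
    using assms(1) by (intro product_prob_spaceI) auto
  let ?S = "{\<omega> \<in> space (ppp_sample T \<Lambda>). \<psi> (event_times \<omega>)}"
  have "sample_event n \<psi> \<in> sets (\<Pi>\<^sub>M i\<in>{..<n}. ppp_location T \<Lambda>)" for n
    using sets_sample_event[OF \<psi>] by (simp cong: sets_PiM_cong)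
  moreover have "Pair n -` ?S = prod_emb UNIV (\<lambda>_. ppp_location T \<Lambda>) {..<n} (sample_event n \<psi>)" for n
    by (auto simp: ppp_sample_eq_pair_measure space_pair_measure space_PiM prod_emb_def
        sample_event_def event_times_def)
  ultimately have "measure (\<Pi>\<^sub>M i\<in>UNIV. ppp_location T \<Lambda>) (Pair n -` ?S)
      = measure (\<Pi>\<^sub>M i\<in>{..<n}. ppp_location T \<Lambda>) (sample_event n \<psi>)" for n
    by (simp add: measure_def Q.emeasure_PiM_emb')
  with pair_measure_pmf_sums[OF Q.P.prob_space_axioms sets_ppp_event[OF \<psi>, unfolded ppp_sample_eq_pair_measure]]
  show ?thesis
    by (simp add: ppp_prob_def ppp_sample_eq_pair_measure)
qed

lemma set_integrable_Icc_bounded: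
  fixes f :: "real \<Rightarrow> real"
  assumes "f \<in> borel_measurable borel" and "\<And>t. t \<in> {a..c} \<Longrightarrow> \<bar>f t\<bar> \<le> C"
  shows "set_integrable lborel {a..c} f"
  unfolding set_integrable_def using assms
  by (intro integrableI_bounded_set_indicator[where B = C]) (auto simp: emeasure_lborel_Icc_eq)

locale bounded_rate =
  fixes T b K :: real and \<Lambda> :: "real \<Rightarrow> real"
  assumes T_pos: "0 < T" and b_pos: "0 < b"
    and rate_measurable [measurable]: "\<Lambda> \<in> borel_measurable borel"
    and rate_lower: "\<And>t. b \<le> \<Lambda> t" and rate_upper: "\<And>t. \<Lambda> t \<le> K"
begin

lemma rate_pos: "0 < \<Lambda> t"
  using b_pos rate_lower by (rule less_le_trans)

lemma set_integrable_rate: "set_integrable lborel {0..T} \<Lambda>"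
proof (rule set_integrable_Icc_bounded[where C = K])
  show "\<bar>\<Lambda> t\<bar> \<le> K" for t
    using rate_lower[of t] rate_upper[of t] b_pos by linarith
qed simp

lemma ppp_mean_ge: "b * T \<le> ppp_mean T \<Lambda>"
proof -
  have "b * T = (\<integral>t\<in>{0..T}. b \<partial>lborel)"
    using T_pos by (simp add: set_integral_const emeasure_lborel_Icc_eq)
  also have "\<dots> \<le> ppp_mean T \<Lambda>"
    unfolding ppp_mean_def using set_integrable_rate rate_lower
    by (intro set_integral_mono set_integrable_Icc_bounded[of "\<lambda>_. b" _ _ "\<bar>b\<bar>"]) auto
  finally show ?thesis .
qed

lemma ppp_mean_pos: "0 < ppp_mean T \<Lambda>"
  using mult_pos_pos[OF b_pos T_pos] ppp_mean_ge by linarith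

lemma prob_space_ppp_location: "prob_space (ppp_location T \<Lambda>)"
  using set_integrable_rate ppp_mean_pos rate_pos
  by (intro prob_space_ppp_location) (auto intro: less_imp_le)

end

locale bounded_rate_pair =
  R0: bounded_rate T b K \<Lambda>0 + R1: bounded_rate T b K \<Lambda>1
  for T b K :: real and \<Lambda>0 \<Lambda>1 :: "real \<Rightarrow> real"
begin

definition location_ratio :: "real \<Rightarrow> real" where
  "location_ratio t = ppp_mean T \<Lambda>0 * \<Lambda>1 t / (ppp_mean T \<Lambda>1 * \<Lambda>0 t)"

lemma location_ratio_measurable [measurable]: "location_ratio \<in> borel_measurable borel"
  unfolding location_ratio_def[abs_def] by measurable

lemma location_ratio_bounds:
  "0 \<le> location_ratio t" "location_ratio t \<le> ppp_mean T \<Lambda>0 * K / (ppp_mean T \<Lambda>1 * b)"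
proof -
  show "0 \<le> location_ratio t"
    using R0.ppp_mean_pos R1.ppp_mean_pos R0.rate_pos R1.rate_pos
    by (simp add: location_ratio_def less_imp_le)
  show "location_ratio t \<le> ppp_mean T \<Lambda>0 * K / (ppp_mean T \<Lambda>1 * b)"
    unfolding location_ratio_def
    using R0.rate_pos R1.rate_pos[of t] R1.rate_upper[of t] R0.ppp_mean_pos R1.ppp_mean_pos R0.b_pos
    by (intro frac_le mult_left_mono mult_pos_pos R1.rate_upper R0.rate_lower) auto
qed

lemma ppp_location_eq_density:
  "ppp_location T \<Lambda>1 = density (ppp_location T \<Lambda>0) location_ratio"
  unfolding ppp_location_def
proof (subst density_density_eq)
  have "ennreal (indicator {0..T} t * \<Lambda>1 t / ppp_mean T \<Lambda>1)
      = ennreal (indicator {0..T} t * \<Lambda>0 t / ppp_mean T \<Lambda>0) * ennreal (location_ratio t)" for t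
    using R0.ppp_mean_pos R1.ppp_mean_pos R0.rate_pos[of t] location_ratio_bounds(1)[of t]
    by (auto simp: location_ratio_def indicator_def simp flip: ennreal_mult)
  then show "density lborel (\<lambda>t. ennreal (indicator {0..T} t * \<Lambda>1 t / ppp_mean T \<Lambda>1))
      = density lborel (\<lambda>t. ennreal (indicator {0..T} t * \<Lambda>0 t / ppp_mean T \<Lambda>0)
          * ennreal (location_ratio t))"
    by simp
qed auto

lemma integral_location_ratio: "(\<integral>t. location_ratio t \<partial>ppp_location T \<Lambda>0) = 1"
proof -
  have "1 = (\<integral>t. 1 \<partial>ppp_location T \<Lambda>1 :: real)"
    using prob_space.prob_space[OF R1.prob_space_ppp_location] by simp
  also have "\<dots> = (\<integral>t. location_ratio t \<partial>ppp_location T \<Lambda>0)"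
    unfolding ppp_location_eq_density using location_ratio_bounds
    by (subst integral_density) auto
  finally show ?thesis by simp
qed

lemma integral_location_ratio_square:
  "(ppp_mean T \<Lambda>1)\<^sup>2 * (\<integral>t. (location_ratio t)\<^sup>2 \<partial>ppp_location T \<Lambda>0) / ppp_mean T \<Lambda>0
    = (\<integral>t\<in>{0..T}. (\<Lambda>1 t)\<^sup>2 / \<Lambda>0 t \<partial>lborel)"
proof -
  have "(\<integral>t. (location_ratio t)\<^sup>2 \<partial>ppp_location T \<Lambda>0)
      = (\<integral>t. indicator {0..T} t * \<Lambda>0 t / ppp_mean T \<Lambda>0 * (location_ratio t)\<^sup>2 \<partial>lborel)"
    unfolding ppp_location_def using R0.ppp_mean_pos R0.rate_pos[THEN less_imp_le]
    by (subst integral_density) (auto intro!: AE_I2 split: split_indicator)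
  also have "\<dots> = ppp_mean T \<Lambda>0 / (ppp_mean T \<Lambda>1)\<^sup>2
      * (\<integral>t. indicator {0..T} t * ((\<Lambda>1 t)\<^sup>2 / \<Lambda>0 t) \<partial>lborel)"
    using R0.ppp_mean_pos R1.ppp_mean_pos R0.rate_pos
    by (subst integral_mult_right_zero[symmetric], intro Bochner_Integration.integral_cong)
      (auto simp: location_ratio_def power2_eq_square field_simps less_imp_neq[symmetric])
  finally show ?thesis
    using R0.ppp_mean_pos R1.ppp_mean_pos by (simp add: set_lebesgue_integral_def field_simps)
qed

lemma chi_square_exponent:
  "ppp_mean T \<Lambda>0 - 2 * ppp_mean T \<Lambda>1
      + (ppp_mean T \<Lambda>1)\<^sup>2 * (\<integral>t. (location_ratio t)\<^sup>2 \<partial>ppp_location T \<Lambda>0) / ppp_mean T \<Lambda>0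
    = (\<integral>t\<in>{0..T}. (\<Lambda>1 t - \<Lambda>0 t)\<^sup>2 / \<Lambda>0 t \<partial>lborel)"
proof -
  have "set_integrable lborel {0..T} (\<lambda>t. (\<Lambda>1 t)\<^sup>2 / \<Lambda>0 t)"
  proof (rule set_integrable_Icc_bounded[where C = "K\<^sup>2 / b"])
    show "\<bar>(\<Lambda>1 t)\<^sup>2 / \<Lambda>0 t\<bar> \<le> K\<^sup>2 / b" for t
      using R0.rate_pos[of t] R1.rate_pos[of t] R0.rate_lower[of t] R1.rate_upper[of t] R0.b_pos
      by (auto intro!: frac_le power_mono)
  qed simp
  moreover have "(\<Lambda>1 t - \<Lambda>0 t)\<^sup>2 / \<Lambda>0 t = ((\<Lambda>1 t)\<^sup>2 / \<Lambda>0 t - 2 * \<Lambda>1 t) + \<Lambda>0 t" for t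
    using R0.rate_pos[of t] by (simp add: power2_eq_square field_simps)
  ultimately show ?thesis
    unfolding integral_location_ratio_square
    using R0.set_integrable_rate R1.set_integrable_rate by (simp add: ppp_mean_def)
qed

lemma ppp_slice_le_second_moment:
  assumes \<psi>: "(\<lambda>\<omega>. \<psi> (event_times \<omega>)) \<in> measurable obs_space (count_space UNIV)"
    and \<eta>: "0 < \<eta>"
  defines "p0 \<equiv> pmf (poisson_pmf (ppp_mean T \<Lambda>0))" and "p1 \<equiv> pmf (poisson_pmf (ppp_mean T \<Lambda>1))"
    and "c \<equiv> \<integral>t. (location_ratio t)\<^sup>2 \<partial>ppp_location T \<Lambda>0"
  shows "p1 n * measure (\<Pi>\<^sub>M i\<in>{..<n}. ppp_location T \<Lambda>1) (sample_event n \<psi>)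
    \<le> (1 + \<eta>) * (p0 n * measure (\<Pi>\<^sub>M i\<in>{..<n}. ppp_location T \<Lambda>0) (sample_event n \<psi>))
      + ((p1 n)\<^sup>2 * c ^ n / p0 n - 2 * p1 n + p0 n) / (4 * \<eta>)"
proof -
  interpret prob_space "ppp_location T \<Lambda>0"
    by (rule R0.prob_space_ppp_location)
  let ?q0 = "measure (\<Pi>\<^sub>M i\<in>{..<n}. ppp_location T \<Lambda>0) (sample_event n \<psi>)"
  let ?q1 = "measure (\<Pi>\<^sub>M i\<in>{..<n}. ppp_location T \<Lambda>1) (sample_event n \<psi>)"
  have p0_pos: "0 < p0 n"
    using R0.ppp_mean_pos by (simp add: p0_def)
  then have "0 \<le> p1 n / p0 n"
    by (simp add: p1_def)
  have ratio_int: "integrable (ppp_location T \<Lambda>0) (\<lambda>t. location_ratio t ^ k)" for k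
    using location_ratio_bounds
    by (intro integrable_const_bound[where B = "(ppp_mean T \<Lambda>0 * K / (ppp_mean T \<Lambda>1 * b)) ^ k"])
      (auto intro!: power_mono)
  (* on the n-point slice, P1 has density (p1 n / p0 n) * prod location_ratio with respect to P0 *)
  have bound: "?q1 * (p1 n / p0 n) \<le> (1 + \<eta>) * ?q0
      + ((p1 n / p0 n)\<^sup>2 * c ^ n - 2 * (p1 n / p0 n) + 1) / (4 * \<eta>)"
    unfolding ppp_location_eq_density c_def
    using \<open>0 \<le> p1 n / p0 n\<close> prob_space_axioms ratio_int[of 1] ratio_int[of 2] location_ratio_bounds
      integral_location_ratio sets_sample_event[OF \<psi>] \<eta>
    by (subst card_lessThan[symmetric], subst mult.commute,
        intro measure_PiM_density_le_second_moment) (auto cong: sets_PiM_cong)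
  have rescale: "p * ((1 + \<eta>) * q + ((a / p)\<^sup>2 * x - 2 * (a / p) + 1) / (4 * \<eta>))
      = (1 + \<eta>) * (p * q) + (a\<^sup>2 * x / p - 2 * a + p) / (4 * \<eta>)"
    if "0 < p" for p a q x :: real
    using that \<eta> by (simp add: field_simps power2_eq_square)
  have "p1 n * ?q1 = p0 n * (?q1 * (p1 n / p0 n))"
    using p0_pos by simp
  also have "\<dots> \<le> p0 n * ((1 + \<eta>) * ?q0
      + ((p1 n / p0 n)\<^sup>2 * c ^ n - 2 * (p1 n / p0 n) + 1) / (4 * \<eta>))"
    using p0_pos by (intro mult_left_mono[OF bound]) simp
  also have "\<dots> = (1 + \<eta>) * (p0 n * ?q0) + ((p1 n)\<^sup>2 * c ^ n / p0 n - 2 * p1 n + p0 n) / (4 * \<eta>)"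
    by (rule rescale[OF p0_pos])
  finally show ?thesis .
qed

theorem ppp_prob_le_chi_square:
  assumes \<psi>: "(\<lambda>\<omega>. \<psi> (event_times \<omega>)) \<in> measurable obs_space (count_space UNIV)"
    and \<eta>: "0 < \<eta>"
  shows "ppp_prob T \<Lambda>1 \<psi> \<le> (1 + \<eta>) * ppp_prob T \<Lambda>0 \<psi>
    + (exp (\<integral>t\<in>{0..T}. (\<Lambda>1 t - \<Lambda>0 t)\<^sup>2 / \<Lambda>0 t \<partial>lborel) - 1) / (4 * \<eta>)"
proof -
  let ?p0 = "pmf (poisson_pmf (ppp_mean T \<Lambda>0))" and ?p1 = "pmf (poisson_pmf (ppp_mean T \<Lambda>1))"
  let ?c = "\<integral>t. (location_ratio t)\<^sup>2 \<partial>ppp_location T \<Lambda>0"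
  have "(\<lambda>n. (1 + \<eta>) * (?p0 n * measure (\<Pi>\<^sub>M i\<in>{..<n}. ppp_location T \<Lambda>0) (sample_event n \<psi>))
        + ((?p1 n)\<^sup>2 * ?c ^ n / ?p0 n - 2 * ?p1 n + ?p0 n) / (4 * \<eta>))
      sums ((1 + \<eta>) * ppp_prob T \<Lambda>0 \<psi>
        + (exp (\<integral>t\<in>{0..T}. (\<Lambda>1 t - \<Lambda>0 t)\<^sup>2 / \<Lambda>0 t \<partial>lborel) - 2 * 1 + 1) / (4 * \<eta>))"
    unfolding chi_square_exponent[symmetric]
    using R0.ppp_mean_pos R1.ppp_mean_pos
    by (intro sums_add sums_mult sums_divide sums_diff ppp_prob_sums R0.prob_space_ppp_location \<psi>
        poisson_pmf_chi_square_sums poisson_pmf_sums)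
  with ppp_prob_sums[OF R1.prob_space_ppp_location \<psi>] show ?thesis
    using sums_le[OF ppp_slice_le_second_moment[OF \<psi> \<eta>]] by simp
qed

end

lemma rate1_bounds:
  assumes "0 < A"
  shows "B \<le> rate1 A B t" and "rate1 A B t \<le> B + A"
  using assms by (auto simp: rate1_def mult_left_le[of _ A, simplified])

lemma rate1_measurable [measurable]: "rate1 A B \<in> borel_measurable borel"
  unfolding rate1_def[abs_def] by measurable

lemma bounded_rate_rate1:
  assumes "0 < T" "0 < A" "0 < B"
  shows "bounded_rate T B (B + A) (rate1 A B)"
  using assms rate1_bounds[OF \<open>0 < A\<close>] by unfold_locales auto

lemma bounded_rate_const:
  assumes "0 < T" "0 < A" "0 < B"
  shows "bounded_rate T B (B + A) (\<lambda>_. B)"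
  using assms by unfold_locales auto

lemma rate1_chi_square_le:
  assumes "0 \<le> T" "0 < A" "0 < B"
  shows "(\<integral>t\<in>{0..T}. (rate1 A B t - B)\<^sup>2 / B \<partial>lborel) \<le> T * (A\<^sup>2 / B)"
proof -
  have sq: "(rate1 A B t - B)\<^sup>2 / B \<le> A\<^sup>2 / B" for t
    using rate1_bounds[OF \<open>0 < A\<close>, of B t] \<open>0 < B\<close>
    by (intro divide_right_mono power_mono) auto
  have "(\<integral>t\<in>{0..T}. (rate1 A B t - B)\<^sup>2 / B \<partial>lborel) \<le> (\<integral>t\<in>{0..T}. A\<^sup>2 / B \<partial>lborel)"
  proof (intro set_integral_mono set_integrable_Icc_bounded sq)
    show "\<bar>(rate1 A B t - B)\<^sup>2 / B\<bar> \<le> A\<^sup>2 / B" for t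
      using sq[of t] \<open>0 < B\<close> by simp
  qed auto
  also have "\<dots> = T * (A\<^sup>2 / B)"
    using assms by (simp add: set_integral_const emeasure_lborel_Icc_eq)
  finally show ?thesis .
qed

lemma ppp_rate1_testing_error_le:
  assumes T: "0 < T" and A: "0 < A" and B: "0 < B" and \<epsilon>: "0 < \<epsilon>"
    and small: "T * (A\<^sup>2 / B) < ln (1 + 4 * \<epsilon>\<^sup>2)"
    and \<psi>: "(\<lambda>\<omega>. \<psi> (event_times \<omega>)) \<in> measurable obs_space (count_space UNIV)"
  shows "(1/2) * (ppp_prob T (\<lambda>_. B) (\<lambda>S. \<not> \<psi> S) + ppp_prob T (rate1 A B) \<psi>) \<le> 1/2 + \<epsilon>"
proof -
  interpret bounded_rate_pair T B "B + A" "\<lambda>_. B" "rate1 A B"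
    using bounded_rate_const[OF T A B] bounded_rate_rate1[OF T A B]
    by (rule bounded_rate_pair.intro)
  let ?\<chi> = "\<integral>t\<in>{0..T}. (rate1 A B t - B)\<^sup>2 / B \<partial>lborel"
  have "?\<chi> < ln (1 + 4 * \<epsilon>\<^sup>2)"
    using rate1_chi_square_le[OF less_imp_le[OF T] A B] small by linarith
  then have "exp ?\<chi> < 1 + 4 * \<epsilon>\<^sup>2"
    by (metis exp_less_mono exp_ln add_pos_nonneg zero_less_one zero_le_power2 mult_nonneg_nonneg
        zero_le_numeral)
  then have "(exp ?\<chi> - 1) / (4 * \<epsilon>) \<le> \<epsilon>"
    using \<epsilon> by (simp add: pos_divide_le_eq power2_eq_square mult_ac)
  then have "ppp_prob T (rate1 A B) \<psi> \<le> (1 + \<epsilon>) * ppp_prob T (\<lambda>_. B) \<psi> + \<epsilon>"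
    using ppp_prob_le_chi_square[OF \<psi> \<epsilon>] by linarith
  moreover have "ppp_prob T (\<lambda>_. B) (\<lambda>S. \<not> \<psi> S) = 1 - ppp_prob T (\<lambda>_. B) \<psi>"
    by (rule ppp_prob_not[OF R0.prob_space_ppp_location \<psi>])
  moreover have "0 \<le> ppp_prob T (\<lambda>_. B) (\<lambda>S. \<not> \<psi> S)"
    by (simp add: ppp_prob_def)
  moreover have "\<epsilon> * ppp_prob T (\<lambda>_. B) \<psi> \<le> \<epsilon>" if "ppp_prob T (\<lambda>_. B) \<psi> \<le> 1"
    using that \<epsilon> by (simp add: mult_left_le)
  ultimately show ?thesis
    by (simp add: algebra_simps)
qed

theorem proposition2p1:
  fixes T :: real
  assumes "T > 1"
  shows "\<forall>\<epsilon>>0. \<exists>\<delta>>0. \<forall>(A::real) (B::real) (\<psi>::real set \<Rightarrow> bool).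
           A > 0 \<longrightarrow> B > 0 \<longrightarrow> A / sqrt B < \<delta> \<longrightarrow>
           (\<lambda>\<omega>. \<psi> (event_times \<omega>)) \<in> measurable obs_space (count_space UNIV) \<longrightarrow>
           (1/2) * (ppp_prob T (\<lambda>_. B) (\<lambda>S. \<not> \<psi> S) + ppp_prob T (rate1 A B) \<psi>)
             \<le> 1/2 + \<epsilon>"
proof (intro allI impI)
  fix \<epsilon> :: real assume \<epsilon>: "0 < \<epsilon>"
  have T: "0 < T" using assms by simp
  have log_pos: "0 < ln (1 + 4 * \<epsilon>\<^sup>2)"
    using \<epsilon> by (simp add: ln_gt_zero)
  show "\<exists>\<delta>>0. \<forall>A B \<psi>. A > 0 \<longrightarrow> B > 0 \<longrightarrow> A / sqrt B < \<delta> \<longrightarrow>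
      (\<lambda>\<omega>. \<psi> (event_times \<omega>)) \<in> measurable obs_space (count_space UNIV) \<longrightarrow>
      (1/2) * (ppp_prob T (\<lambda>_. B) (\<lambda>S. \<not> \<psi> S) + ppp_prob T (rate1 A B) \<psi>) \<le> 1/2 + \<epsilon>"
  (* delta is chosen so that T A^2/B < T delta^2 = ln (1 + 4 eps^2), i.e. exp chi - 1 < 4 eps^2 *)
  proof (intro exI[of _ "sqrt (ln (1 + 4 * \<epsilon>\<^sup>2) / T)"] conjI allI impI)
    show "0 < sqrt (ln (1 + 4 * \<epsilon>\<^sup>2) / T)"
      using log_pos T by simp
    fix A B :: real and \<psi> :: "real set \<Rightarrow> bool"
    assume A: "0 < A" and B: "0 < B" and "A / sqrt B < sqrt (ln (1 + 4 * \<epsilon>\<^sup>2) / T)"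
    then have "(A / sqrt B)\<^sup>2 < (sqrt (ln (1 + 4 * \<epsilon>\<^sup>2) / T))\<^sup>2"
      by (intro power_strict_mono) auto
    then have "A\<^sup>2 / B < ln (1 + 4 * \<epsilon>\<^sup>2) / T"
      using B T log_pos by (simp add: power_divide)
    then have "T * (A\<^sup>2 / B) < ln (1 + 4 * \<epsilon>\<^sup>2)"
      using T by (simp add: pos_less_divide_eq mult.commute)
    then show "(\<lambda>\<omega>. \<psi> (event_times \<omega>)) \<in> measurable obs_space (count_space UNIV) \<Longrightarrow>
        (1/2) * (ppp_prob T (\<lambda>_. B) (\<lambda>S. \<not> \<psi> S) + ppp_prob T (rate1 A B) \<psi>) \<le> 1/2 + \<epsilon>"
      by (rule ppp_rate1_testing_error_le[OF T A B \<epsilon>])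
  qed
qed

end
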